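(* Let $\eta>0$ and $\beta\in(1,2]$, and let $\lambda(n)=1-\exp\left[-\left(\frac{n}{\eta}\right)^\beta+\left(\frac{n-1}{\eta}\right)^\beta\right]$ for integers $n\geq 1$ be the hazard function of the Weibull-1 distribution $\mathrm{W}_1(\eta,\beta)$. Then $\lambda$ is a concave function of $n$, i.e. its second-order discrete derivative satisfies $\lambda(n)-2\lambda(n-1)+\lambda(n-2)\leq 0$ for every integer $n\geq 3$.
   Context: The Weibull-1 (Type I discrete Weibull) distribution $\mathrm{W}_1(\eta,\beta)$, with $\eta>0,\beta>0$, is the distribution of a random variable $N$ with values in $\{1,2,\dots\}$ and survival function $S(n)=\mathbb{P}[N>n]=\exp[-(n/\eta)^\beta]$ for integers $n\ge 0$. Its hazard function is $\lambda(n)=\mathbb{P}[N=n\mid N>n-1]$, which equals the formula given in the claim. For a function $\lambda$ on the integers, its second-order discrete derivative at $n$ is $\lambda''(n)=\lambda(n)-2\lambda(n-1)+\lambda(n-2)$, and concavity means this is nonpositive. *)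

theory Defs
  imports Complex_Main
begin

definition weibull1_hazard :: "real \<Rightarrow> real \<Rightarrow> nat \<Rightarrow> real" where
  "weibull1_hazard \<eta> \<beta> n =
     1 - exp (- ((real n / \<eta>) powr \<beta>) + ((real n - 1) / \<eta>) powr \<beta>)"

end

theory Submission
  imports Defs "HOL-Analysis.Analysis"
begin

text \<open>Write \<open>\<Delta>(n) = (n/\<eta>) powr \<beta> - ((n-1)/\<eta>) powr \<beta>\<close>, so that the hazard is \<open>1 - exp (-\<Delta>(n))\<close>.
  By convexity of \<open>exp\<close> it suffices that \<open>\<Delta>(n) + \<Delta>(n-2) \<le> 2 \<Delta>(n-1)\<close>, i.e. that the second
  difference \<open>(x+1) powr \<beta> - 2 x powr \<beta> + (x-1) powr \<beta>\<close> is nonincreasing in \<open>x\<close>. Its derivative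
  is \<open>\<beta>\<close> times the corresponding second difference of \<open>x powr (\<beta> - 1)\<close>, which is nonpositive
  because \<open>x powr (\<beta> - 1)\<close> is concave for \<open>0 \<le> \<beta> - 1 \<le> 1\<close>.\<close>

lemma powr_concave:
  assumes "0 \<le> p" "p \<le> 1"
  shows "concave_on {0<..} (\<lambda>x::real. x powr p)"
proof (rule f''_le0_imp_concave[where f' = "\<lambda>x. p * x powr (p - 1)"
                                   and f'' = "\<lambda>x. p * ((p - 1) * x powr (p - 2))"])
  fix x :: real assume "x \<in> {0<..}"
  then show "((\<lambda>x. x powr p) has_real_derivative p * x powr (p - 1)) (at x)"
    and "((\<lambda>x. p * x powr (p - 1)) has_real_derivative p * ((p - 1) * x powr (p - 2))) (at x)"
    by (auto intro!: derivative_eq_intros simp: algebra_simps)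
  show "p * ((p - 1) * x powr (p - 2)) \<le> 0"
    using assms by (intro mult_nonneg_nonpos mult_nonpos_nonneg) auto
qed simp

lemma powr_second_difference_nonpos:
  fixes x p :: real
  assumes "0 \<le> p" "p \<le> 1" "1 < x"
  shows "(x + 1) powr p - 2 * x powr p + (x - 1) powr p \<le> 0"
proof -
  have "(1 - 1/2) * (x - 1) powr p + (1/2) * (x + 1) powr p
          \<le> ((1 - 1/2) *\<^sub>R (x - 1) + (1/2) *\<^sub>R (x + 1)) powr p"
    using concave_onD[OF powr_concave[OF assms(1,2)], of "1/2" "x - 1" "x + 1"] assms(3)
    by simp
  also have "(1 - 1/2) *\<^sub>R (x - 1) + (1/2) *\<^sub>R (x + 1) = x"
    by (simp add: field_simps)
  finally show ?thesis
    by simp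
qed

lemma powr_second_difference_antimono:
  fixes b x y :: real
  assumes "1 \<le> b" "b \<le> 2" "1 \<le> x" "x \<le> y"
  shows "(y + 1) powr b - 2 * y powr b + (y - 1) powr b
           \<le> (x + 1) powr b - 2 * x powr b + (x - 1) powr b"
proof (rule DERIV_nonpos_imp_decreasing_open[OF assms(4)])
  fix t assume t: "x < t" "t < y"
  have "((\<lambda>t. (t + 1) powr b - 2 * t powr b + (t - 1) powr b) has_real_derivative
          b * ((t + 1) powr (b - 1) - 2 * t powr (b - 1) + (t - 1) powr (b - 1))) (at t)"
    using t assms by (auto intro!: derivative_eq_intros simp: algebra_simps)
  moreover have "b * ((t + 1) powr (b - 1) - 2 * t powr (b - 1) + (t - 1) powr (b - 1)) \<le> 0"
    using powr_second_difference_nonpos[of "b - 1" t] t assms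
    by (simp add: mult_nonneg_nonpos)
  ultimately show "\<exists>D. ((\<lambda>t. (t + 1) powr b - 2 * t powr b + (t - 1) powr b)
                          has_real_derivative D) (at t) \<and> D \<le> 0"
    by blast
next
  show "continuous_on {x..y} (\<lambda>t. (t + 1) powr b - 2 * t powr b + (t - 1) powr b)"
    using assms by (intro continuous_on_powr' continuous_intros) auto
qed

lemma exp_neg_midpoint_le:
  fixes a b c :: real
  assumes "a + c \<le> 2 * b"
  shows "2 * exp (- b) \<le> exp (- a) + exp (- c)"
proof -
  have "exp (- b) \<le> exp ((1 - 1/2) *\<^sub>R (- a) + (1/2) *\<^sub>R (- c))"
    using assms by simp
  also have "\<dots> \<le> (1 - 1/2) * exp (- a) + (1/2) * exp (- c)"
    using convex_onD[OF exp_convex, of "1/2" "- a" "- c"] by simp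
  finally show ?thesis
    by simp
qed

lemma weibull1_hazard_eq:
  assumes "\<eta> > 0" "n \<ge> 1"
  shows "weibull1_hazard \<eta> \<beta> n
           = 1 - exp (- ((real n powr \<beta> - (real n - 1) powr \<beta>) / \<eta> powr \<beta>))"
proof -
  have "(real n / \<eta>) powr \<beta> = real n powr \<beta> / \<eta> powr \<beta>"
       "((real n - 1) / \<eta>) powr \<beta> = (real n - 1) powr \<beta> / \<eta> powr \<beta>"
    using assms by (simp_all add: powr_divide)
  then show ?thesis
    unfolding weibull1_hazard_def by (simp add: diff_divide_distrib)
qed

theorem proposition1:
  fixes \<eta> \<beta> :: real and n :: nat
  assumes "\<eta> > 0" and "1 < \<beta>" and "\<beta> \<le> 2" and "n \<ge> 3"
  shows "weibull1_hazard \<eta> \<beta> n - 2 * weibull1_hazard \<eta> \<beta> (n - 1)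
           + weibull1_hazard \<eta> \<beta> (n - 2) \<le> 0"
proof -
  define m where "m = real n - 2"
  have m: "1 \<le> m" "real (n - 1) = m + 1" "real (n - 2) = m" "real n = m + 2"
    using assms(4) by (auto simp: m_def)
  define increment where "increment x = (x powr \<beta> - (x - 1) powr \<beta>) / \<eta> powr \<beta>" for x
  have hazard: "weibull1_hazard \<eta> \<beta> k = 1 - exp (- increment (real k))" if "k \<ge> 1" for k
    using weibull1_hazard_eq[OF assms(1) that] by (simp add: increment_def)
  have "(m + 2) powr \<beta> - 2 * (m + 1) powr \<beta> + m powr \<beta>
          \<le> (m + 1) powr \<beta> - 2 * m powr \<beta> + (m - 1) powr \<beta>"
    using powr_second_difference_antimono[of \<beta> m "m + 1"] assms(2,3) m(1)
    by (simp add: add.assoc)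
  then have "((m + 2) powr \<beta> - 2 * (m + 1) powr \<beta> + m powr \<beta>) / \<eta> powr \<beta>
          \<le> ((m + 1) powr \<beta> - 2 * m powr \<beta> + (m - 1) powr \<beta>) / \<eta> powr \<beta>"
    by (rule divide_right_mono) simp
  then have "increment (m + 2) - increment (m + 1) \<le> increment (m + 1) - increment m"
    unfolding increment_def by (simp add: diff_divide_distrib add_divide_distrib algebra_simps)
  then have "2 * exp (- increment (m + 1)) \<le> exp (- increment m) + exp (- increment (m + 2))"
    by (intro exp_neg_midpoint_le) simp
  moreover have "weibull1_hazard \<eta> \<beta> n = 1 - exp (- increment (m + 2))"
    by (rule hazard[of n, unfolded m(4)]) (use assms(4) in simp)
  moreover have "weibull1_hazard \<eta> \<beta> (n - 1) = 1 - exp (- increment (m + 1))"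
    by (rule hazard[of "n - 1", unfolded m(2)]) (use assms(4) in simp)
  moreover have "weibull1_hazard \<eta> \<beta> (n - 2) = 1 - exp (- increment m)"
    by (rule hazard[of "n - 2", unfolded m(3)]) (use assms(4) in simp)
  ultimately show ?thesis
    by linarith
qed

end
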